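(* The smallest number of vertices of an arithmetic sizeable graph is $36$. That is, for $n=9$ there is an arithmetic graph which is sizeable with respect to the partitions $A=A_0\sqcup A_1$, $B=B_0\sqcup B_1$, and for no $n\le 8$ is there such an arithmetic graph.
   Context: A simplicial graph $\Gamma$ is sizeable with respect to partitions $A=A_0\sqcup A_1$, $B=B_0\sqcup B_1$ if it is bipartite on $A$ and $B$, contains no cycle of length $4$, and each induced subgraph $\Gamma(A_s\sqcup B_t)$, $s,t\in\{0,1\}$, is connected. A graph is arithmetic if it is built as follows: the vertices are divided into four sets $A_0,A_1,B_0,B_1$, each of size $n$ and identified with $\mathbb{Z}/n$ (write $a_s^i$, $b_t^i$ for $i\in\mathbb{Z}/n$); there are eight numbers $h_{s,t},k_{s,t}\in\mathbb{Z}/n$ for $s,t\in\{0,1\}$; and the vertex $a_s^i$ is joined by an edge to $b_t^{i+h_{s,t}}$ and to $b_t^{i+k_{s,t}}$, for all $i,s,t$; there are no other edges. Here $A=A_0\sqcup A_1$, $B=B_0\sqcup B_1$. *)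

theory Defs
  imports Main
begin

definition simple_graph :: "'v set \<Rightarrow> ('v \<Rightarrow> 'v \<Rightarrow> bool) \<Rightarrow> bool" where
  "simple_graph V E \<longleftrightarrow> (\<forall>x y. E x y \<longrightarrow> x \<in> V \<and> y \<in> V \<and> x \<noteq> y \<and> E y x)"

definition bipartite_on :: "'v set \<Rightarrow> ('v \<Rightarrow> 'v \<Rightarrow> bool) \<Rightarrow> 'v set \<Rightarrow> 'v set \<Rightarrow> bool" where
  "bipartite_on V E A B \<longleftrightarrow> A \<inter> B = {} \<and> A \<union> B = V \<and>
     (\<forall>x y. E x y \<longrightarrow> (x \<in> A \<and> y \<in> B) \<or> (x \<in> B \<and> y \<in> A))"

definition has_4cycle :: "'v set \<Rightarrow> ('v \<Rightarrow> 'v \<Rightarrow> bool) \<Rightarrow> bool" where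
  "has_4cycle V E \<longleftrightarrow> (\<exists>a\<in>V. \<exists>b\<in>V. \<exists>c\<in>V. \<exists>d\<in>V. distinct [a, b, c, d] \<and>
       E a b \<and> E b c \<and> E c d \<and> E d a)"

definition induced_connected :: "('v \<Rightarrow> 'v \<Rightarrow> bool) \<Rightarrow> 'v set \<Rightarrow> bool" where
  "induced_connected E S \<longleftrightarrow> S \<noteq> {} \<and>
     (\<forall>x\<in>S. \<forall>y\<in>S. (x, y) \<in> {(u, w). u \<in> S \<and> w \<in> S \<and> E u w}\<^sup>*)"

definition sizeable :: "'v set \<Rightarrow> ('v \<Rightarrow> 'v \<Rightarrow> bool) \<Rightarrow> 'v set \<Rightarrow> 'v set \<Rightarrow> 'v set \<Rightarrow> 'v set \<Rightarrow> bool" where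
  "sizeable V E A0 A1 B0 B1 \<longleftrightarrow>
     simple_graph V E \<and> A0 \<inter> A1 = {} \<and> B0 \<inter> B1 = {} \<and>
     bipartite_on V E (A0 \<union> A1) (B0 \<union> B1) \<and>
     \<not> has_4cycle V E \<and>
     (\<forall>As \<in> {A0, A1}. \<forall>Bt \<in> {B0, B1}. induced_connected E (As \<union> Bt))"

text \<open>Vertices are triples (side, s, i): side False = A, True = B; s \<in> {0,1} encoded as bool
  (False = 0, True = 1); i \<in> {0..<n} represents an element of Z/n.
  So a_s^i = (False, s, i) and b_t^i = (True, t, i).
  Parameters h, k :: bool \<Rightarrow> bool \<Rightarrow> nat give h_{s,t}, k_{s,t} (taken mod n).\<close>

type_synonym avert = "bool \<times> bool \<times> nat"

definition arith_V :: "nat \<Rightarrow> avert set" where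
  "arith_V n = {(p, s, i). i < n}"

definition arith_part :: "nat \<Rightarrow> bool \<Rightarrow> bool \<Rightarrow> avert set" where
  "arith_part n p s = {(p, s, i) | i. i < n}"

definition arith_edge0 :: "nat \<Rightarrow> (bool \<Rightarrow> bool \<Rightarrow> nat) \<Rightarrow> (bool \<Rightarrow> bool \<Rightarrow> nat)
    \<Rightarrow> avert \<Rightarrow> avert \<Rightarrow> bool" where
  "arith_edge0 n h k u v \<longleftrightarrow> (\<exists>s t i. i < n \<and> u = (False, s, i) \<and>
      (v = (True, t, (i + h s t) mod n) \<or> v = (True, t, (i + k s t) mod n)))"

definition arith_adj :: "nat \<Rightarrow> (bool \<Rightarrow> bool \<Rightarrow> nat) \<Rightarrow> (bool \<Rightarrow> bool \<Rightarrow> nat)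
    \<Rightarrow> avert \<Rightarrow> avert \<Rightarrow> bool" where
  "arith_adj n h k u v \<longleftrightarrow> arith_edge0 n h k u v \<or> arith_edge0 n h k v u"

definition arith_sizeable :: "nat \<Rightarrow> (bool \<Rightarrow> bool \<Rightarrow> nat) \<Rightarrow> (bool \<Rightarrow> bool \<Rightarrow> nat) \<Rightarrow> bool" where
  "arith_sizeable n h k \<longleftrightarrow>
     sizeable (arith_V n) (arith_adj n h k)
       (arith_part n False False) (arith_part n False True)
       (arith_part n True False) (arith_part n True True)"

end

theory Submission
  imports Defs "HOL-Number_Theory.Cong"
begin

text \<open>
  A 4-cycle runs through parts A_s, B_t, A_s', B_t', and following its edges adds offsets
  x, -y, z, -w, each h_st or k_st for the two parts it joins; so 4-cycles are exactly the non-backtracking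
  alternating sums x - y + z - w = 0 (mod n). Walking a_s^i, b_t^(i+k), a_s^(i+k-h), ... shows
  that the part graph on A_s and B_t is connected exactly when d_st = k_st - h_st is a unit mod n.

  Sizeability thereby becomes a condition on residues: the d_st are units; two of them in a
  common row or column differ even up to sign, as otherwise there is a 4-cycle through three of
  the four parts; and, with c = h_00 - h_10 + h_11 - h_01, none of the sixteen sums
  c + e1 d_00 - e2 d_10 + e3 d_11 - e4 d_01 (e_i in {0,1}) vanishes. For n <= 8 a finite
  computation shows that the first two conditions force these sums to cover all residues, while
  for n = 9 an explicit choice of h and k satisfies all three.
\<close>

lemma cong_add_eq_0_iff: "[a + b = 0] (mod n) \<longleftrightarrow> [a = - b] (mod n)"
  for a b n :: int
  using cong_diff_iff_cong_0[of a "- b" n] by simp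

definition arith_offset ::
    "(bool \<Rightarrow> bool \<Rightarrow> nat) \<Rightarrow> (bool \<Rightarrow> bool \<Rightarrow> nat) \<Rightarrow> bool \<Rightarrow> bool \<Rightarrow> bool \<Rightarrow> int" where
  "arith_offset h k s t e = int (if e then k s t else h s t)"

definition arith_diff ::
    "(bool \<Rightarrow> bool \<Rightarrow> nat) \<Rightarrow> (bool \<Rightarrow> bool \<Rightarrow> nat) \<Rightarrow> bool \<Rightarrow> bool \<Rightarrow> int" where
  "arith_diff h k s t = int (k s t) - int (h s t)"

lemma arith_offset_eq: "arith_offset h k s t e = int (h s t) + of_bool e * arith_diff h k s t"
  by (simp add: arith_offset_def arith_diff_def)

lemma arith_adj_commute: "arith_adj n h k u v \<longleftrightarrow> arith_adj n h k v u"
  by (auto simp: arith_adj_def)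

lemma arith_adj_side: "arith_adj n h k u v \<Longrightarrow> fst v = (\<not> fst u)"
  by (auto simp: arith_adj_def arith_edge0_def)

lemma arith_adj_A_B:
  "arith_adj n h k (False, s, i) (True, t, j) \<longleftrightarrow>
     i < n \<and> j < n \<and> (\<exists>e. [int j = int i + arith_offset h k s t e] (mod int n))"
proof -
  have "j = (i + m) mod n \<longleftrightarrow> j < n \<and> [int j = int i + int m] (mod int n)" if "0 < n" for m
    using that by (metis cong_int_iff cong_mod_right cong_sym mod_less mod_less_divisor
        of_nat_add unique_euclidean_semiring_class.cong_def)
  then show ?thesis
    by (auto simp: arith_adj_def arith_edge0_def arith_offset_def)
qed

lemma arith_adj_A_B_int:
  assumes "0 < n" "[m' = m + arith_offset h k s t e] (mod int n)"
  shows "arith_adj n h k (False, s, nat (m mod int n)) (True, t, nat (m' mod int n))"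
proof -
  have "[int (nat (m' mod int n)) = int (nat (m mod int n)) + arith_offset h k s t e] (mod int n)"
    using assms by (simp add: cong_def mod_add_left_eq)
  then show ?thesis
    using assms(1) by (auto simp: arith_adj_A_B nat_less_iff)
qed

subsection \<open>Four-cycles\<close>

text \<open>The path a_s^i, b_t^(i+x), a_s'^(i+x-y), b_t'^(i+x-y+z) closes up through an edge of
  offset w iff x - y + z = w (mod n); the other two conditions exclude backtracking.\<close>

definition arith_4cycle ::
    "nat \<Rightarrow> (bool \<Rightarrow> bool \<Rightarrow> nat) \<Rightarrow> (bool \<Rightarrow> bool \<Rightarrow> nat) \<Rightarrow> bool" where
  "arith_4cycle n h k \<longleftrightarrow> (\<exists>s s' t t' ex ey ez ew.
     let x = arith_offset h k s t ex; y = arith_offset h k s' t ey;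
         z = arith_offset h k s' t' ez; w = arith_offset h k s t' ew
     in [x - y + z - w = 0] (mod int n) \<and> \<not> (s = s' \<and> [x = y] (mod int n)) \<and>
        \<not> (t = t' \<and> [z = y] (mod int n)))"

lemma arith_4cycle_intro:
  assumes "[int (h s t) - int (h s' t) + int (h s' t') - int (h s t')
      + of_bool ex * arith_diff h k s t - of_bool ey * arith_diff h k s' t
      + of_bool ez * arith_diff h k s' t' - of_bool ew * arith_diff h k s t' = 0] (mod int n)"
    and "s = s' \<Longrightarrow>
      \<not> [of_bool ex * arith_diff h k s t = of_bool ey * arith_diff h k s t] (mod int n)"
    and "t = t' \<Longrightarrow>
      \<not> [of_bool ez * arith_diff h k s' t = of_bool ey * arith_diff h k s' t] (mod int n)"
  shows "arith_4cycle n h k"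
  unfolding arith_4cycle_def Let_def
proof (intro exI conjI notI)
  show "[arith_offset h k s t ex - arith_offset h k s' t ey + arith_offset h k s' t' ez
      - arith_offset h k s t' ew = 0] (mod int n)"
    using assms(1) by (simp add: arith_offset_eq algebra_simps)
next
  assume "s = s' \<and> [arith_offset h k s t ex = arith_offset h k s' t ey] (mod int n)"
  then obtain eq: "s = s'"
    and c: "[arith_offset h k s t ex = arith_offset h k s' t ey] (mod int n)" ..
  from c have "[of_bool ex * arith_diff h k s' t = of_bool ey * arith_diff h k s' t] (mod int n)"
    unfolding arith_offset_eq eq cong_add_lcancel .
  with assms(2)[OF eq] show False
    unfolding eq by blast
next
  assume "t = t' \<and> [arith_offset h k s' t' ez = arith_offset h k s' t ey] (mod int n)"
  then obtain eq: "t = t'"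
    and c: "[arith_offset h k s' t' ez = arith_offset h k s' t ey] (mod int n)" ..
  from c have "[of_bool ez * arith_diff h k s' t' = of_bool ey * arith_diff h k s' t'] (mod int n)"
    unfolding arith_offset_eq eq cong_add_lcancel .
  with assms(3)[OF eq] show False
    unfolding eq by blast
qed

lemma has_4cycle_if_arith_4cycle:
  assumes n: "0 < n" and "arith_4cycle n h k"
  shows "has_4cycle (arith_V n) (arith_adj n h k)"
proof -
  obtain s s' t t' ex ey ez ew x y z w where
    x: "x = arith_offset h k s t ex" and y: "y = arith_offset h k s' t ey" and
    z: "z = arith_offset h k s' t' ez" and w: "w = arith_offset h k s t' ew" and
    closed: "[x - y + z - w = 0] (mod int n)" and
    ac: "\<not> (s = s' \<and> [x = y] (mod int n))" and bd: "\<not> (t = t' \<and> [z = y] (mod int n))"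
    using assms(2) unfolding arith_4cycle_def Let_def by blast
  define vx :: "bool \<Rightarrow> bool \<Rightarrow> int \<Rightarrow> avert"
    where "vx p r m = (p, r, nat (m mod int n))" for p r m
  have "[x = 0 + arith_offset h k s t ex] (mod int n)" using x by simp
  then have ab: "arith_adj n h k (vx False s 0) (vx True t x)"
    unfolding vx_def by (rule arith_adj_A_B_int[OF n])
  have "[x = (x - y) + arith_offset h k s' t ey] (mod int n)" using y by simp
  then have cb: "arith_adj n h k (vx False s' (x - y)) (vx True t x)"
    unfolding vx_def by (rule arith_adj_A_B_int[OF n])
  have "[x - y + z = (x - y) + arith_offset h k s' t' ez] (mod int n)" using z by simp
  then have cd: "arith_adj n h k (vx False s' (x - y)) (vx True t' (x - y + z))"
    unfolding vx_def by (rule arith_adj_A_B_int[OF n])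
  have "[x - y + z = 0 + arith_offset h k s t' ew] (mod int n)"
    using closed w by (simp add: cong_iff_dvd_diff)
  then have ad: "arith_adj n h k (vx False s 0) (vx True t' (x - y + z))"
    unfolding vx_def by (rule arith_adj_A_B_int[OF n])
  have "vx False s 0 \<noteq> vx False s' (x - y)"
    using ac n by (auto simp: vx_def cong_iff_dvd_diff dvd_eq_mod_eq_0 nat_eq_iff)
  moreover have "vx True t x \<noteq> vx True t' (x - y + z)"
    using bd n
    by (auto simp: vx_def cong_iff_dvd_diff mod_eq_dvd_iff eq_nat_nat_iff dvd_diff_commute)
  ultimately have "distinct [vx False s 0, vx True t x, vx False s' (x - y), vx True t' (x - y + z)]"
    by (simp add: vx_def)
  moreover have "vx p r m \<in> arith_V n" for p r m
    using n by (simp add: vx_def arith_V_def nat_less_iff)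
  ultimately show ?thesis
    unfolding has_4cycle_def using ab cb cd ad arith_adj_commute by blast
qed

lemma arith_4cycle_if_square:
  assumes ab: "arith_adj n h k (False, s, i) (True, t, j)"
    and cb: "arith_adj n h k (False, s', i') (True, t, j)"
    and cd: "arith_adj n h k (False, s', i') (True, t', j')"
    and ad: "arith_adj n h k (False, s, i) (True, t', j')"
    and ac: "(s, i) \<noteq> (s', i')" and bd: "(t, j) \<noteq> (t', j')"
  shows "arith_4cycle n h k"
proof -
  obtain ex ey ez ew where
    x: "[int j = int i + arith_offset h k s t ex] (mod int n)" and
    y: "[int j = int i' + arith_offset h k s' t ey] (mod int n)" and
    z: "[int j' = int i' + arith_offset h k s' t' ez] (mod int n)" and
    w: "[int j' = int i + arith_offset h k s t' ew] (mod int n)" and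
    lt: "i < n" "i' < n" "j < n" "j' < n"
    using ab cb cd ad by (auto simp: arith_adj_A_B)
  let ?x = "arith_offset h k s t ex" and ?y = "arith_offset h k s' t ey"
    and ?z = "arith_offset h k s' t' ez" and ?w = "arith_offset h k s t' ew"
  have "[?x - ?y + ?z - ?w =
      (int j - int i) - (int j - int i') + (int j' - int i') - (int j' - int i)] (mod int n)"
    using x y z w
    by (intro cong_add cong_diff) (auto simp: cong_iff_dvd_diff dvd_diff_commute algebra_simps)
  then have "[?x - ?y + ?z - ?w = 0] (mod int n)" by simp
  moreover have "\<not> (s = s' \<and> [?x = ?y] (mod int n))"
  proof
    assume "s = s' \<and> [?x = ?y] (mod int n)"
    moreover have "[int i + ?x = int i' + ?y] (mod int n)"
      using x y by (metis cong_sym cong_trans)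
    ultimately have "[int i = int i'] (mod int n)"
      by (metis cong_add_lcancel cong_add_rcancel cong_sym cong_trans cong_refl)
    then have "i = i'"
      using lt by (metis cong_int_iff cong_less_imp_eq_nat zero_le)
    with ac \<open>s = s' \<and> _\<close> show False by simp
  qed
  moreover have "\<not> (t = t' \<and> [?z = ?y] (mod int n))"
  proof
    assume "t = t' \<and> [?z = ?y] (mod int n)"
    then have "[int j' = int j] (mod int n)"
      using y z by (metis cong_add cong_refl cong_sym cong_trans)
    then have "j' = j"
      using lt by (metis cong_int_iff cong_less_imp_eq_nat zero_le)
    with bd \<open>t = t' \<and> _\<close> show False by simp
  qed
  ultimately show ?thesis
    unfolding arith_4cycle_def Let_def by blast
qed

lemma has_4cycle_arith_iff:
  assumes "0 < n"
  shows "has_4cycle (arith_V n) (arith_adj n h k) \<longleftrightarrow> arith_4cycle n h k"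
proof
  assume "has_4cycle (arith_V n) (arith_adj n h k)"
  then obtain a b c d where dist: "distinct [a, b, c, d]" and
    E: "arith_adj n h k a b" "arith_adj n h k b c" "arith_adj n h k c d" "arith_adj n h k d a"
    unfolding has_4cycle_def by blast
  have sides: "fst b = (\<not> fst a)" "fst c = fst a" "fst d = (\<not> fst a)"
    using E(1-3)[THEN arith_adj_side] by auto
  show "arith_4cycle n h k"
  proof (cases "fst a")
    case False
    then obtain s i t j s' i' t' j' where
      "a = (False, s, i)" "b = (True, t, j)" "c = (False, s', i')" "d = (True, t', j')"
      using sides by (cases a; cases b; cases c; cases d) auto
    then show ?thesis
      using E dist by (intro arith_4cycle_if_square[of n h k s i t j s' i' t' j'])
        (auto simp: arith_adj_commute)
  next
    case True
    then obtain s i t j s' i' t' j' where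
      "b = (False, s, i)" "c = (True, t, j)" "d = (False, s', i')" "a = (True, t', j')"
      using sides by (cases a; cases b; cases c; cases d) auto
    then show ?thesis
      using E dist by (intro arith_4cycle_if_square[of n h k s i t j s' i' t' j'])
        (auto simp: arith_adj_commute)
  qed
qed (rule has_4cycle_if_arith_4cycle[OF assms])

subsection \<open>Connectivity\<close>

lemma induced_connected_if_root:
  assumes "r \<in> S" and sym: "\<And>u w. E u w \<Longrightarrow> E w u"
    and reach: "\<And>v. v \<in> S \<Longrightarrow> (r, v) \<in> {(u, w). u \<in> S \<and> w \<in> S \<and> E u w}\<^sup>*"
  shows "induced_connected E S"
proof -
  let ?R = "{(u, w). u \<in> S \<and> w \<in> S \<and> E u w}"
  have "sym (?R\<^sup>*)"
    by (rule sym_rtrancl) (auto simp: sym_def intro: sym)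
  then show ?thesis
    unfolding induced_connected_def using assms(1) reach
    by (meson empty_iff rtrancl_trans symD)
qed

lemma induced_connected_arith_if_coprime:
  assumes n: "0 < n" and cop: "coprime (arith_diff h k s t) (int n)"
  shows "induced_connected (arith_adj n h k) (arith_part n False s \<union> arith_part n True t)"
    (is "induced_connected _ ?S")
proof -
  let ?R = "{(u, w). u \<in> ?S \<and> w \<in> ?S \<and> arith_adj n h k u w}"
  let ?d = "arith_diff h k s t"
  define A :: "int \<Rightarrow> avert" where "A m = (False, s, nat (m mod int n))" for m
  define B :: "int \<Rightarrow> avert" where "B m = (True, t, nat (m mod int n))" for m
  have in_S: "A m \<in> ?S" "B m \<in> ?S" for m
    using n by (auto simp: A_def B_def arith_part_def nat_less_iff)
  have edge: "(A m, B m') \<in> ?R" "(B m', A m) \<in> ?R"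
    if "[m' = m + arith_offset h k s t e] (mod int n)" for m m' e
    using arith_adj_A_B_int[OF n that] in_S by (auto simp: A_def B_def arith_adj_commute)
  have step: "(A m, A (m + ?d)) \<in> ?R\<^sup>*" for m
  proof -
    have "[m + int (k s t) = m + arith_offset h k s t True] (mod int n)"
      "[m + int (k s t) = (m + ?d) + arith_offset h k s t False] (mod int n)"
      by (simp_all add: arith_offset_def arith_diff_def)
    then show ?thesis
      using edge by (meson converse_rtrancl_into_rtrancl r_into_rtrancl)
  qed
  have multiples: "(A 0, A (int l * ?d)) \<in> ?R\<^sup>*" for l
  proof (induction l)
    case (Suc l)
    then show ?case
      using step[of "int l * ?d"] by (simp add: algebra_simps)
  qed simp
  have all_A: "(A 0, A m) \<in> ?R\<^sup>*" for m
  proof -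
    obtain x where x: "[?d * x = 1] (mod int n)"
      using cong_solve_coprime_int[OF cop] by blast
    define l where "l = nat ((x * m) mod int n)"
    have "[int l = x * m] (mod int n)"
      using n by (simp add: l_def cong_def)
    then have "[int l * ?d = x * m * ?d] (mod int n)"
      by (rule cong_scalar_right)
    also have "x * m * ?d = m * (?d * x)"
      by (simp add: algebra_simps)
    also have "[m * (?d * x) = m * 1] (mod int n)"
      using x by (rule cong_scalar_left)
    finally have "A (int l * ?d) = A m"
      unfolding A_def cong_def by simp
    then show ?thesis
      using multiples[of l] by simp
  qed
  have "(A 0, v) \<in> ?R\<^sup>*" if "v \<in> ?S" for v
  proof -
    from that obtain i where "v = (False, s, i) \<or> v = (True, t, i)" "i < n"
      by (auto simp: arith_part_def)
    then consider "v = A (int i)" | "v = B (int i)"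
      by (auto simp: A_def B_def)
    then show ?thesis
    proof cases
      case 2
      have "[int i = (int i - int (h s t)) + arith_offset h k s t False] (mod int n)"
        by (simp add: arith_offset_def)
      then show ?thesis
        using 2 all_A edge by (meson rtrancl.rtrancl_into_rtrancl)
    qed (use all_A in simp)
  qed
  then show ?thesis
    using in_S by (intro induced_connected_if_root[of "A 0"]) (auto simp: arith_adj_commute)
qed

lemma coprime_if_induced_connected_arith:
  assumes n: "2 \<le> n"
    and conn: "induced_connected (arith_adj n h k) (arith_part n False s \<union> arith_part n True t)"
      (is "induced_connected _ ?S")
  shows "coprime (arith_diff h k s t) (int n)"
proof -
  let ?R = "{(u, w). u \<in> ?S \<and> w \<in> ?S \<and> arith_adj n h k u w}"
  define g where "g = gcd (arith_diff h k s t) (int n)"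
  define \<phi> :: "avert \<Rightarrow> int" where
    "\<phi> v = (if fst v then int (snd (snd v)) - int (h s t) else int (snd (snd v)))" for v
  have offset: "[arith_offset h k s t e = int (h s t)] (mod g)" for e
    by (simp add: arith_offset_eq g_def cong_iff_dvd_diff)
  have edge: "[\<phi> (True, t, j) = \<phi> (False, s, i)] (mod g)"
    if adj: "arith_adj n h k (False, s, i) (True, t, j)" for i j
  proof -
    obtain e where "[int j = int i + arith_offset h k s t e] (mod int n)"
      using adj unfolding arith_adj_A_B by blast
    then have "[int j = int i + arith_offset h k s t e] (mod g)"
      by (rule cong_dvd_mono_modulus) (simp add: g_def)
    also have "[int i + arith_offset h k s t e = int i + int (h s t)] (mod g)"
      using offset by (rule cong_add_lcancel[THEN iffD2])
    finally show ?thesis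
      by (simp add: \<phi>_def cong_iff_dvd_diff algebra_simps)
  qed
  have "[\<phi> v = \<phi> (False, s, 0)] (mod g)" if "((False, s, 0), v) \<in> ?R\<^sup>*" for v
    using that
  proof (induction rule: rtrancl_induct)
    case (step u w)
    then have "u \<in> ?S" "w \<in> ?S" "arith_adj n h k u w" by auto
    then have "[\<phi> w = \<phi> u] (mod g)"
      using edge by (auto simp: arith_part_def arith_adj_commute cong_sym dest: arith_adj_side)
    then show ?case using step.IH by (rule cong_trans)
  qed simp
  moreover have "((False, s, 0), (False, s, 1)) \<in> ?R\<^sup>*"
    using conn n unfolding induced_connected_def by (auto simp: arith_part_def)
  ultimately have "[1 = 0] (mod g)"
    by (force simp: \<phi>_def)
  then show ?thesis
    by (simp add: g_def cong_iff_dvd_diff coprime_iff_gcd_eq_1)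
qed

lemma induced_connected_arith_iff:
  assumes "0 < n"
  shows "induced_connected (arith_adj n h k) (arith_part n False s \<union> arith_part n True t) \<longleftrightarrow>
    coprime (arith_diff h k s t) (int n)"
  using assms coprime_if_induced_connected_arith[of n h k s t]
    induced_connected_arith_if_coprime[of n h k s t]
  by (cases "n = 1") auto

subsection \<open>Sizeability as a condition on residues\<close>

lemma arith_sizeable_iff:
  assumes "0 < n"
  shows "arith_sizeable n h k \<longleftrightarrow>
    (\<forall>s t. coprime (arith_diff h k s t) (int n)) \<and> \<not> arith_4cycle n h k"
proof -
  have "simple_graph (arith_V n) (arith_adj n h k)"
    by (auto simp: simple_graph_def arith_adj_def arith_edge0_def arith_V_def)
  moreover have "bipartite_on (arith_V n) (arith_adj n h k)
      (arith_part n False False \<union> arith_part n False True)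
      (arith_part n True False \<union> arith_part n True True)"
    by (auto simp: bipartite_on_def arith_adj_def arith_edge0_def arith_V_def arith_part_def)
  moreover have "arith_part n p False \<inter> arith_part n p True = {}" for p
    by (auto simp: arith_part_def)
  moreover have "(\<forall>As\<in>{arith_part n False False, arith_part n False True}.
      \<forall>Bt\<in>{arith_part n True False, arith_part n True True}.
        induced_connected (arith_adj n h k) (As \<union> Bt))
    \<longleftrightarrow> (\<forall>s t. coprime (arith_diff h k s t) (int n))"
    by (auto simp: induced_connected_arith_iff[OF assms] all_bool_eq)
  ultimately show ?thesis
    unfolding arith_sizeable_def sizeable_def
    by (simp add: has_4cycle_arith_iff assms conj_commute)
qed

lemma arith_4cycle_same_row:
  assumes "t \<noteq> t'" "\<not> [arith_diff h k s t = 0] (mod int n)"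
    and "[arith_diff h k s t = arith_diff h k s t'] (mod int n) \<or>
      [arith_diff h k s t = - arith_diff h k s t'] (mod int n)"
  shows "arith_4cycle n h k"
  using assms(3)
proof
  assume "[arith_diff h k s t = arith_diff h k s t'] (mod int n)"
  then show ?thesis
    using assms(1,2) arith_4cycle_intro[where h=h and k=k and n=n and s=s and s'=s and t=t and t'=t'
        and ex=True and ey=False and ez=False and ew=True]
    by (simp add: cong_diff_iff_cong_0)
next
  assume "[arith_diff h k s t = - arith_diff h k s t'] (mod int n)"
  then show ?thesis
    using assms(1,2) arith_4cycle_intro[where h=h and k=k and n=n and s=s and s'=s and t=t and t'=t'
        and ex=True and ey=False and ez=True and ew=False]
    by (simp add: cong_add_eq_0_iff)
qed

lemma arith_4cycle_same_column:
  assumes "s \<noteq> s'" "\<not> [arith_diff h k s' t = 0] (mod int n)"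
    and "[arith_diff h k s t = arith_diff h k s' t] (mod int n) \<or>
      [arith_diff h k s t = - arith_diff h k s' t] (mod int n)"
  shows "arith_4cycle n h k"
  using assms(3)
proof
  assume eq: "[arith_diff h k s t = arith_diff h k s' t] (mod int n)"
  show ?thesis
    using assms(1,2) cong_sym[OF eq]
      arith_4cycle_intro[where h=h and k=k and n=n and s=s and s'=s' and t=t and t'=t
        and ex=False and ey=False and ez=True and ew=True]
    by (simp add: cong_diff_iff_cong_0)
next
  assume "[arith_diff h k s t = - arith_diff h k s' t] (mod int n)"
  then show ?thesis
    using assms(1,2) arith_4cycle_intro[where h=h and k=k and n=n and s=s and s'=s' and t=t and t'=t
        and ex=True and ey=False and ez=True and ew=False]
    by (simp add: cong_add_eq_0_iff)
qed

lemma signed_sums_cover_residues: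
  fixes N a b p q r :: int
  assumes N: "2 \<le> N" "N \<le> 8"
    and units: "coprime a N" "coprime b N" "coprime p N" "coprime q N"
    and "\<not> [a = b] (mod N)" "\<not> [a = - b] (mod N)" "\<not> [a = q] (mod N)" "\<not> [a = - q] (mod N)"
    and "\<not> [p = b] (mod N)" "\<not> [p = - b] (mod N)" "\<not> [p = q] (mod N)" "\<not> [p = - q] (mod N)"
  shows "\<exists>ex ey ez ew.
    [r + of_bool ex * a - of_bool ey * b + of_bool ez * p - of_bool ew * q = 0] (mod N)"
proof -
  \<comment> \<open>It suffices to check representatives \<open>0 \<le> a, b, p, q, r < N\<close>.\<close>
  have "\<forall>N\<in>set [2..8]. let U = filter (\<lambda>d. coprime d N) [0..N-1] in
    \<forall>a\<in>set U. \<forall>b\<in>set U. \<forall>p\<in>set U. \<forall>q\<in>set U.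
      \<not> [a = b] (mod N) \<and> \<not> [a = - b] (mod N) \<and> \<not> [a = q] (mod N) \<and> \<not> [a = - q] (mod N) \<and>
      \<not> [p = b] (mod N) \<and> \<not> [p = - b] (mod N) \<and> \<not> [p = q] (mod N) \<and> \<not> [p = - q] (mod N) \<longrightarrow>
      (\<forall>r\<in>set [0..N-1]. \<exists>ex ey ez ew.
         [r + of_bool ex * a - of_bool ey * b + of_bool ez * p - of_bool ew * q = 0] (mod N))"
    by code_simp
  note check = this[unfolded Let_def, rule_format]
  have range: "N \<in> set [2..8]"
    unfolding set_upto using N by simp
  have res: "x mod N \<in> set [0..N-1]" for x
    using N by simp
  have unit: "x mod N \<in> set (filter (\<lambda>d. coprime d N) [0..N-1])" if "coprime x N" for x
    using that N by simp
  have neg: "[x = - (y mod N)] (mod N) \<longleftrightarrow> [x = - y] (mod N)" for x y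
    by (simp add: cong_def mod_simps)
  obtain ex ey ez ew where
    "[r mod N + of_bool ex * (a mod N) - of_bool ey * (b mod N) + of_bool ez * (p mod N)
       - of_bool ew * (q mod N) = 0] (mod N)"
    using check[of N "a mod N" "b mod N" "p mod N" "q mod N" "r mod N",
        OF range unit[OF units(1)] unit[OF units(2)] unit[OF units(3)] unit[OF units(4)] _ res]
      N assms(7-) by (auto simp: neg)
  moreover have "[r mod N + of_bool ex * (a mod N) - of_bool ey * (b mod N) + of_bool ez * (p mod N)
       - of_bool ew * (q mod N) =
     r + of_bool ex * a - of_bool ey * b + of_bool ez * p - of_bool ew * q] (mod N)"
    by (intro cong_add cong_diff cong_mult cong_refl) simp_all
  ultimately show ?thesis
    by (meson cong_sym cong_trans)
qed

lemma arith_4cycle_if_le_8: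
  assumes n: "1 \<le> n" "n \<le> 8" and units: "\<And>s t. coprime (arith_diff h k s t) (int n)"
  shows "arith_4cycle n h k"
proof (cases "n = 1")
  case True
  then show ?thesis
    using arith_4cycle_intro[where h=h and k=k and n=n and s=False and s'=True and t=False and t'=True
        and ex=False and ey=False and ez=False and ew=False]
    by simp
next
  case False
  have nonzero: "\<not> [arith_diff h k s t = 0] (mod int n)" for s t
  proof
    assume "[arith_diff h k s t = 0] (mod int n)"
    then have "is_unit (int n)"
      using units[of s t] coprime_common_divisor[of "arith_diff h k s t" "int n" "int n"]
      by (simp add: cong_0_iff)
    with False show False by simp
  qed
  let ?a = "arith_diff h k False False" and ?b = "arith_diff h k True False"
    and ?p = "arith_diff h k True True" and ?q = "arith_diff h k False True"
  show ?thesis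
  proof (rule ccontr)
    assume no_cycle: "\<not> arith_4cycle n h k"
    have "\<not> [?a = ?b] (mod int n)" "\<not> [?a = - ?b] (mod int n)"
      using arith_4cycle_same_column[where s=False and s'=True and t=False and h=h and k=k and n=n]
        nonzero no_cycle by auto
    moreover have "\<not> [?a = ?q] (mod int n)" "\<not> [?a = - ?q] (mod int n)"
      using arith_4cycle_same_row[where s=False and t=False and t'=True and h=h and k=k and n=n]
        nonzero no_cycle by auto
    moreover have "\<not> [?p = ?b] (mod int n)" "\<not> [?p = - ?b] (mod int n)"
      using arith_4cycle_same_row[where s=True and t=True and t'=False and h=h and k=k and n=n]
        nonzero no_cycle by auto
    moreover have "\<not> [?p = ?q] (mod int n)" "\<not> [?p = - ?q] (mod int n)"
      using arith_4cycle_same_column[where s=True and s'=False and t=True and h=h and k=k and n=n]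
        nonzero no_cycle by auto
    ultimately obtain ex ey ez ew where
      "[int (h False False) - int (h True False) + int (h True True) - int (h False True)
        + of_bool ex * ?a - of_bool ey * ?b + of_bool ez * ?p - of_bool ew * ?q = 0] (mod int n)"
      using signed_sums_cover_residues[where N="int n" and a="?a" and b="?b" and p="?p" and q="?q"
          and r="int (h False False) - int (h True False) + int (h True True) - int (h False True)"]
        n False units by auto
    then show False
      using arith_4cycle_intro[where h=h and k=k and n=n and s=False and s'=True and t=False and t'=True
        and ex=ex and ey=ey and ez=ez and ew=ew]
        no_cycle by simp
  qed
qed

lemma arith_sizeable_9:
  "arith_sizeable 9 (\<lambda>s t. if s then 0 else if t then 0 else 5)
     (\<lambda>s t. if s then if t then 1 else 2 else if t then 2 else 6)"
  unfolding arith_sizeable_iff[of 9, simplified] arith_diff_def arith_4cycle_def arith_offset_def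
  by code_simp

theorem mainTheorem12:
  shows "(\<exists>h k. arith_sizeable 9 h k) \<and>
         (\<forall>n h k. 1 \<le> n \<and> n \<le> 8 \<longrightarrow> \<not> arith_sizeable n h k)"
proof
  show "\<exists>h k. arith_sizeable 9 h k"
    using arith_sizeable_9 by blast
  show "\<forall>n h k. 1 \<le> n \<and> n \<le> 8 \<longrightarrow> \<not> arith_sizeable n h k"
  proof (intro allI impI)
    fix n :: nat and h k :: "bool \<Rightarrow> bool \<Rightarrow> nat"
    assume "1 \<le> n \<and> n \<le> 8"
    then show "\<not> arith_sizeable n h k"
      using arith_4cycle_if_le_8[of n h k] arith_sizeable_iff[of n h k] by auto
  qed
qed

end
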